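(* For $\zeta^0,\zeta^1\in\mathbb C$ and $n\in\mathbb Z$, \[ \sum_{k=0}^{N-1}(\zeta^0)_k^{-1}\,\omega^{k(\zeta^1-n)}=\omega^n\,\omega^{(N-1)(\zeta^0+\zeta^1)}\sum_{k=0}^{N-1}(-\zeta^1+n)_k^{-1}\,\omega^{-k\zeta^0}. \]
   Context: $N\ge2$, $\omega=e^{2\pi i/N}$, $\omega^x=e^{2\pi ix/N}$. For $\zeta\in\mathbb C$ and $k\ge0$, $(\zeta)_k^{-1}=(1-\omega^{\zeta+1})(1-\omega^{\zeta+2})\cdots(1-\omega^{\zeta+k})$. *)

theory Defs
  imports Complex_Main
begin

definition omega_pow :: "nat \<Rightarrow> complex \<Rightarrow> complex" where
  "omega_pow N x = exp (2 * of_real pi * \<i> * x / of_nat N)"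

text \<open>The symbol (zeta)_k^{-1} of the paper: the finite product
  (1 - omega^(zeta+1)) ... (1 - omega^(zeta+k)); empty product 1 for k = 0.\<close>
definition qpoch_inv :: "nat \<Rightarrow> complex \<Rightarrow> nat \<Rightarrow> complex" where
  "qpoch_inv N z k = (\<Prod>j=1..k. 1 - omega_pow N (z + of_nat j))"

end

(* With q = omega, u = omega^zeta0 and v = omega^(n - zeta1) the two sums are
   sum_{k<N} (uq;q)_k v^-k and sum_{k<N} (vq;q)_k u^-k, so after clearing denominators the
   identity says that G(u,v) = sum_{k<N} (uq;q)_k v^(N-1-k) is symmetric in u and v.
   Since q is a primitive N-th root of unity, (xq;q)_N = 1 - x^N, and telescoping yields
     (1 - uq) G(uq,v) = v G(u,v) + 1 - u^N - v^N,   (1 - vq) G(u,vq) = u G(u,v) + 1 - u^N - v^N.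
   Hence D(v) = G(u,v) - G(v,u) satisfies (1 - vq) D(vq) = u D(v); iterating N times gives
   (1 - u^N - v^N) D(v) = 0, and D, a polynomial in v, must vanish. *)
theory Submission
  imports Defs "HOL-Computational_Algebra.Polynomial"
begin

definition qpoch :: "'a::comm_ring_1 \<Rightarrow> 'a \<Rightarrow> nat \<Rightarrow> 'a" where
  "qpoch q u k = (\<Prod>j=1..k. 1 - u * q^j)"

definition qpoch_sum :: "'a::comm_ring_1 \<Rightarrow> nat \<Rightarrow> 'a \<Rightarrow> 'a \<Rightarrow> 'a" where
  "qpoch_sum q N u v = (\<Sum>k<N. qpoch q u k * v^(N-1-k))"

lemma qpoch_0 [simp]: "qpoch q u 0 = 1"
  by (simp add: qpoch_def)

lemma qpoch_Suc: "qpoch q u (Suc k) = qpoch q u k * (1 - u * q^Suc k)"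
  unfolding qpoch_def by (simp add: prod.nat_ivl_Suc' mult.commute)

lemma qpoch_Suc_shift: "(1 - u*q) * qpoch q (u*q) k = qpoch q u (Suc k)"
proof -
  have "qpoch q u (Suc k) = (1 - u*q) * (\<Prod>j=Suc 1..Suc k. 1 - u * q^j)"
    unfolding qpoch_def by (simp add: prod.atLeast_Suc_atMost)
  also have "(\<Prod>j=Suc 1..Suc k. 1 - u * q^j) = qpoch q (u*q) k"
    unfolding qpoch_def prod.shift_bounds_cl_Suc_ivl by (simp add: mult.assoc)
  finally show ?thesis by simp
qed

lemma sum_qpoch_Suc:
  "(\<Sum>k<N. qpoch q u (Suc k) * x^(N-1-k)) = x * qpoch_sum q N u x - x^N + qpoch q u N"
proof -
  define f where "f k = qpoch q u k * x^(N-k)" for k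
  have "f 0 + (\<Sum>k<N. f (Suc k)) = (\<Sum>k<N. f k) + f N"
    by (simp flip: sum.lessThan_Suc_shift)
  moreover have "(\<Sum>k<N. f k) = x * qpoch_sum q N u x"
    unfolding qpoch_sum_def sum_distrib_left f_def
    by (intro sum.cong refl) (simp add: Suc_diff_Suc[symmetric] mult.left_commute)
  ultimately show ?thesis by (simp add: f_def algebra_simps)
qed

lemma qpoch_sum_shift_left:
  assumes "qpoch q u N = 1 - u^N"
  shows "(1 - u*q) * qpoch_sum q N (u*q) v = v * qpoch_sum q N u v + 1 - u^N - v^N"
proof -
  have "(1 - u*q) * qpoch_sum q N (u*q) v = (\<Sum>k<N. qpoch q u (Suc k) * v^(N-1-k))"
    unfolding qpoch_sum_def sum_distrib_left
    by (intro sum.cong refl) (simp flip: qpoch_Suc_shift add: algebra_simps)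
  then show ?thesis using assms sum_qpoch_Suc[where x=v] by simp
qed

lemma qpoch_sum_shift_right:
  assumes "q^N = 1" and "qpoch q u N = 1 - u^N"
  shows "(1 - v*q) * qpoch_sum q N u (v*q) = u * qpoch_sum q N u v + 1 - u^N - v^N"
proof -
  have "u * qpoch_sum q N u v = (\<Sum>k<N. (qpoch q u k - qpoch q u (Suc k)) * (v*q)^(N-1-k))"
    unfolding qpoch_sum_def sum_distrib_left
  proof (intro sum.cong refl)
    fix k assume "k \<in> {..<N}"
    then have "Suc k + (N-1-k) = N" by simp
    then have "q^Suc k * q^(N-1-k) = 1"
      using assms(1) by (metis power_add)
    moreover have "(qpoch q u k - qpoch q u (Suc k)) * (v*q)^(N-1-k)
        = u * (qpoch q u k * v^(N-1-k)) * (q^Suc k * q^(N-1-k))"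
      by (simp add: qpoch_Suc power_mult_distrib algebra_simps)
    ultimately show "u * (qpoch q u k * v^(N-1-k)) = (qpoch q u k - qpoch q u (Suc k)) * (v*q)^(N-1-k)"
      by simp
  qed
  also have "\<dots> = qpoch_sum q N u (v*q) - (\<Sum>k<N. qpoch q u (Suc k) * (v*q)^(N-1-k))"
    unfolding qpoch_sum_def by (simp add: sum_subtractf left_diff_distrib)
  also have "\<dots> = qpoch_sum q N u (v*q) - ((v*q) * qpoch_sum q N u (v*q) - v^N + 1 - u^N)"
    using assms sum_qpoch_Suc[where x="v*q"] by (simp add: power_mult_distrib)
  finally show ?thesis by (simp add: algebra_simps)
qed

lemma qpoch_sum_antisym_shift:
  assumes "q^N = 1" and "qpoch q u N = 1 - u^N" and "qpoch q v N = 1 - v^N"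
  shows "(1 - v*q) * (qpoch_sum q N u (v*q) - qpoch_sum q N (v*q) u)
       = u * (qpoch_sum q N u v - qpoch_sum q N v u)"
  unfolding right_diff_distrib qpoch_sum_shift_right[OF assms(1,2)] qpoch_sum_shift_left[OF assms(3)]
  by (simp add: algebra_simps)

lemma qpoch_sum_antisym_iterate:
  assumes "q^N = 1" and "\<And>x. qpoch q x N = 1 - x^N"
  shows "qpoch q v m * (qpoch_sum q N u (v * q^m) - qpoch_sum q N (v * q^m) u)
       = u^m * (qpoch_sum q N u v - qpoch_sum q N v u)"
proof (induction m)
  case 0
  then show ?case by simp
next
  case (Suc m)
  let ?w = "v * q^m"
  have "qpoch q v (Suc m) * (qpoch_sum q N u (v * q^Suc m) - qpoch_sum q N (v * q^Suc m) u)
      = qpoch q v m * ((1 - ?w*q) * (qpoch_sum q N u (?w*q) - qpoch_sum q N (?w*q) u))"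
    by (simp add: qpoch_Suc algebra_simps)
  also have "\<dots> = u * (qpoch q v m * (qpoch_sum q N u ?w - qpoch_sum q N ?w u))"
    using qpoch_sum_antisym_shift[OF assms(1) assms(2) assms(2)] by simp
  also have "\<dots> = u^Suc m * (qpoch_sum q N u v - qpoch_sum q N v u)"
    using Suc.IH by simp
  finally show ?case .
qed

lemma poly_prod_qpoch: "poly (\<Prod>j=1..k. [:1, -(q^j):]) x = qpoch q x k"
  unfolding qpoch_def by (simp add: poly_prod algebra_simps)

lemma qpoch_sum_commute:
  fixes q u v :: "'a::{idom, ring_char_0}"
  assumes "q^N = 1" and "\<And>x. qpoch q x N = 1 - x^N"
  shows "qpoch_sum q N u v = qpoch_sum q N v u"
proof -
  have "N > 0"
    using assms(2)[of 0] by (cases N) auto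
  define p where "p = (\<Sum>k<N. monom (qpoch q u k) (N-1-k))
      - (\<Sum>k<N. smult (u^(N-1-k)) (\<Prod>j=1..k. [:1, -(q^j):]))"
  have poly_p: "poly p x = qpoch_sum q N u x - qpoch_sum q N x u" for x
    unfolding p_def qpoch_sum_def poly_diff poly_sum poly_smult poly_prod_qpoch poly_monom
    by (simp add: mult.commute)
  define r where "r = [:1 - u^N:] - monom 1 N"
  have "poly (r * p) x = 0" for x
    using qpoch_sum_antisym_iterate[OF assms, of x N u] assms
    by (simp add: r_def poly_p poly_monom algebra_simps)
  then have "r * p = 0"
    using poly_all_0_iff_0 by blast
  moreover have "r \<noteq> 0"
  proof
    assume "r = 0"
    then have "coeff r N = 0" by simp
    then show False using \<open>N > 0\<close> by (cases N) (simp_all add: r_def)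
  qed
  ultimately have "p = 0" by simp
  then show ?thesis using poly_p[of v] by simp
qed

lemma qpoch_root_of_unity:
  fixes q x :: "'a::idom"
  assumes "N > 0" and "q^N = 1" and "inj_on (\<lambda>j. q^j) {..<N}"
  shows "qpoch q x N = 1 - x^N"
proof -
  define p where "p = (\<Prod>j=1..N. [:1, -(q^j):])"
  define r where "r = 1 - (monom 1 N :: 'a poly)"
  define A where "A = insert 0 ((\<lambda>i. q^i) ` {..<N})"
  have poly_p: "poly p z = qpoch q z N" for z
    unfolding p_def by (rule poly_prod_qpoch)
  have "p = r"
  proof (rule poly_eqI_degree[where A = A])
    fix z assume "z \<in> A"
    then consider "z = 0" | i where "i < N" "z = q^i"
      unfolding A_def by auto
    then show "poly p z = poly r z"
    proof cases
      case 1
      then show ?thesis using assms(1) by (simp add: poly_p r_def poly_monom qpoch_def)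
    next
      case (2 i)
      then have "1 - z * q^(N-i) = 0" and "N - i \<in> {1..N}"
        using assms(2) by (auto simp flip: power_add)
      then have "poly p z = 0"
        unfolding poly_p qpoch_def by (auto intro: prod_zero)
      moreover have "z^N = 1"
        using 2 assms(2) by (simp flip: power_mult add: mult.commute power_mult)
      ultimately show ?thesis by (simp add: r_def poly_monom)
    qed
  next
    have "q \<noteq> 0"
      using assms(1,2) by (auto simp: power_0_left)
    then have "0 \<notin> (\<lambda>i. q^i) ` {..<N}"
      by auto
    then have "card A = Suc N"
      using assms(3) by (simp add: A_def card_insert_disjoint card_image)
    moreover have "degree p \<le> (\<Sum>j=1..N. 1)"
      unfolding p_def by (rule order.trans[OF degree_prod_sum_le], simp, rule sum_mono, simp)
    moreover have "degree r \<le> N"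
      unfolding r_def by (rule order.trans[OF degree_diff_le_max]) (simp add: degree_monom_le)
    ultimately show "degree p < card A" "degree r < card A" by auto
  qed
  then show ?thesis
    using poly_p[of x] by (simp add: r_def poly_monom)
qed

lemma sum_qpoch_divide_power:
  fixes x :: "'a::field"
  assumes "x \<noteq> 0"
  shows "(\<Sum>k<N. qpoch q u k / x^k) = qpoch_sum q N u x / x^(N-1)"
  unfolding qpoch_sum_def sum_divide_distrib
proof (intro sum.cong refl)
  fix k assume "k \<in> {..<N}"
  then have "x^(N-1-k) = x^(N-1) / x^k" using assms by (simp add: power_diff)
  then show "qpoch q u k / x^k = qpoch q u k * x^(N-1-k) / x^(N-1)"
    using assms by (simp add: field_simps)
qed

lemma sum_qpoch_divide_power_duality:
  fixes q u v :: "'a::{field, ring_char_0}"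
  assumes "q^N = 1" and "\<And>x. qpoch q x N = 1 - x^N" and "u \<noteq> 0" and "v \<noteq> 0"
  shows "(\<Sum>k<N. qpoch q u k / v^k) = (u/v)^(N-1) * (\<Sum>k<N. qpoch q v k / u^k)"
  using qpoch_sum_commute[OF assms(1,2), of u v] assms(3,4)
  by (simp add: sum_qpoch_divide_power power_divide)

lemma omega_pow_add: "omega_pow N (a + b) = omega_pow N a * omega_pow N b"
  unfolding omega_pow_def by (simp add: exp_add[symmetric] add_divide_distrib distrib_left)

lemma omega_pow_of_nat_mult: "omega_pow N (of_nat k * a) = omega_pow N a ^ k"
  unfolding omega_pow_def by (simp add: exp_of_nat_mult[symmetric] mult_ac)

lemma omega_pow_uminus: "omega_pow N (- a) = inverse (omega_pow N a)"
  unfolding omega_pow_def by (simp add: exp_minus)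

lemma omega_pow_nonzero: "omega_pow N a \<noteq> 0"
  unfolding omega_pow_def by simp

lemma omega_pow_of_nat: "omega_pow N (of_nat k) = omega_pow N 1 ^ k"
  using omega_pow_of_nat_mult[of N k 1] by simp

lemma omega_pow_of_int_power:
  assumes "N > 0"
  shows "omega_pow N (of_int n) ^ N = 1"
proof -
  have "omega_pow N (of_int n) ^ N = omega_pow N (of_nat N * of_int n)"
    by (simp add: omega_pow_of_nat_mult)
  also have "\<dots> = cis (2 * pi * real_of_int n)"
    unfolding omega_pow_def cis_conv_exp using assms by (simp add: field_simps)
  finally show ?thesis by simp
qed

lemma omega_pow_one_power: "omega_pow N 1 ^ k = cis (2 * pi * real k / real N)"
proof -
  have "omega_pow N (of_nat k) = cis (2 * pi * real k / real N)"
    unfolding omega_pow_def cis_conv_exp by (simp add: field_simps)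
  then show ?thesis by (simp add: omega_pow_of_nat)
qed

lemma omega_pow_one_power_self: "N > 0 \<Longrightarrow> omega_pow N 1 ^ N = 1"
  using omega_pow_of_int_power[of N 1] by simp

lemma qpoch_inv_eq_qpoch: "qpoch_inv N z k = qpoch (omega_pow N 1) (omega_pow N z) k"
  unfolding qpoch_inv_def qpoch_def by (simp add: omega_pow_add omega_pow_of_nat)

lemma qpoch_omega_pow_one:
  assumes "N > 0"
  shows "qpoch (omega_pow N 1) x N = 1 - x^N"
proof (rule qpoch_root_of_unity[OF assms])
  show "omega_pow N 1 ^ N = 1"
    using assms by (rule omega_pow_one_power_self)
  show "inj_on (\<lambda>j. omega_pow N 1 ^ j) {..<N}"
    using bij_betw_roots_unity[OF assms] by (simp add: omega_pow_one_power bij_betw_def)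
qed

theorem lemmaA8:
  fixes N :: nat and z0 z1 :: complex and n :: int
  assumes "N \<ge> 2"
  shows "(\<Sum>k=0..N-1. qpoch_inv N z0 k * omega_pow N (of_nat k * (z1 - of_int n)))
       = omega_pow N (of_int n) * omega_pow N ((of_nat N - 1) * (z0 + z1))
         * (\<Sum>k=0..N-1. qpoch_inv N (- z1 + of_int n) k * omega_pow N (- (of_nat k * z0)))"
proof -
  have N: "N > 0" and range: "{0..N-1} = {..<N}" and "of_nat N - 1 = (of_nat (N-1) :: complex)"
    using assms by (auto simp: of_nat_diff)
  define u v c where "u = omega_pow N z0" and "v = omega_pow N (- z1 + of_int n)"
    and "c = omega_pow N (of_int n)"
  have "u \<noteq> 0" "v \<noteq> 0"
    unfolding u_def v_def by (simp_all add: omega_pow_nonzero)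
  have "omega_pow N (z1 - of_int n) = inverse v"
    unfolding v_def omega_pow_uminus[symmetric] by simp
  then have lhs: "qpoch_inv N z0 k * omega_pow N (of_nat k * (z1 - of_int n))
      = qpoch (omega_pow N 1) u k / v^k" for k
    by (simp add: qpoch_inv_eq_qpoch omega_pow_of_nat_mult u_def divide_inverse power_inverse)
  have rhs: "qpoch_inv N (- z1 + of_int n) k * omega_pow N (- (of_nat k * z0))
      = qpoch (omega_pow N 1) v k / u^k" for k
    by (simp add: qpoch_inv_eq_qpoch omega_pow_uminus omega_pow_of_nat_mult u_def v_def divide_inverse)
  have "omega_pow N z1 = c * inverse v"
    unfolding c_def v_def omega_pow_uminus[symmetric] omega_pow_add[symmetric] by simp
  then have "omega_pow N ((of_nat N - 1) * (z0 + z1)) = (u * (c * inverse v))^(N-1)"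
    unfolding \<open>of_nat N - 1 = of_nat (N-1)\<close> omega_pow_of_nat_mult omega_pow_add u_def
    by simp
  then have "c * omega_pow N ((of_nat N - 1) * (z0 + z1)) = c^Suc (N-1) * (u/v)^(N-1)"
    by (simp add: power_mult_distrib divide_inverse mult_ac)
  also have "Suc (N-1) = N"
    using N by simp
  also have "c^N = 1"
    unfolding c_def by (rule omega_pow_of_int_power[OF N])
  finally show ?thesis
    unfolding range lhs rhs c_def[symmetric]
    using sum_qpoch_divide_power_duality[OF omega_pow_one_power_self[OF N]
        qpoch_omega_pow_one[OF N] \<open>u \<noteq> 0\<close> \<open>v \<noteq> 0\<close>]
    by simp
qed

end
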